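(* Let $X, Y$ be Polish spaces equipped with Borel probability measures $\mu$ and $\nu$, and let $c: X\times Y\to[0,\infty]$ be Borel measurable. Let $\overline{\Phi}:V\to[0,\infty]$ be the lower semi-continuous envelope of $\Phi$, i.e. the largest function on $V$ that is lower semi-continuous for the norm topology and is dominated by $\Phi$ on $V_+$. Then $\overline{\Phi}(\mathbb{1},\mathbb{1})=P^{\mathrm{rel}}$. Consequently, $\Phi$ is lower semi-continuous at $(\mathbb{1},\mathbb{1})$ if and only if $P=P^{\mathrm{rel}}$.
   Context: Let $W=L^1(\mu)\times L^1(\nu)$ with its product norm. Let $V$ be the subspace of pairs $(f,g)\in W$ with $\int_X f\,d\mu=\int_Y g\,d\nu$. Let $V_+=\{(f,g)\in V: f\ge0,\ g\ge0\}$. For $(f,g)\in V_+$, let $\Pi(f,g)$ be the set of non-negative Borel measures on $X\times Y$ with marginals $f\mu$ and $g\nu$. Define $\Phi(f,g)=\inf\{\int c\,d\pi:\pi\in\Pi(f,g)\}$ for $(f,g)\in V_+$. The symbol $\mathbb{1}$ denotes the constant function $1$. Let $P=\Phi(\mathbb{1},\mathbb{1})=\inf\{\int c\,d\pi : \pi\in\Pi(\mu,\nu)\}$, where $\Pi(\mu,\nu)$ is the set of Borel probability measures on $X\times Y$ with marginals $\mu$ and $\nu$. For $0\le\varepsilon\le1$, let $\Pi^{\varepsilon}(\mu,\nu)$ be the set of non-negative Borel measures $\pi$ on $X\times Y$ with $\pi(X\times Y)\ge1-\varepsilon$, $p_X(\pi)\le\mu$ and $p_Y(\pi)\le\nu$.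 Set $P^{\varepsilon}=\inf\{\int c\,d\pi:\pi\in\Pi^{\varepsilon}(\mu,\nu)\}$ and $P^{\mathrm{rel}}=\lim_{\varepsilon\to0}P^{\varepsilon}$. *)

theory Defs
  imports "HOL-Probability.Probability"
begin

text \<open>Elements of W = L^1(mu) x L^1(nu) are represented by pairs of (representative)
  real functions; the product norm is the sum of the L^1 norms (a seminorm on
  representatives, inducing the norm topology of W).\<close>

definition L1dist :: "'a measure \<Rightarrow> 'b measure \<Rightarrow>
    (('a \<Rightarrow> real) \<times> ('b \<Rightarrow> real)) \<Rightarrow> (('a \<Rightarrow> real) \<times> ('b \<Rightarrow> real)) \<Rightarrow> real" where
  "L1dist \<mu> \<nu> u v =
     (\<integral>x. \<bar>fst u x - fst v x\<bar> \<partial>\<mu>) + (\<integral>y. \<bar>snd u y - snd v y\<bar> \<partial>\<nu>)"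

definition Vset :: "'a measure \<Rightarrow> 'b measure \<Rightarrow> (('a \<Rightarrow> real) \<times> ('b \<Rightarrow> real)) set" where
  "Vset \<mu> \<nu> = {(f, g). integrable \<mu> f \<and> integrable \<nu> g \<and>
                        (\<integral>x. f x \<partial>\<mu>) = (\<integral>y. g y \<partial>\<nu>)}"

definition Vplus :: "'a measure \<Rightarrow> 'b measure \<Rightarrow> (('a \<Rightarrow> real) \<times> ('b \<Rightarrow> real)) set" where
  "Vplus \<mu> \<nu> = {(f, g) \<in> Vset \<mu> \<nu>. (AE x in \<mu>. 0 \<le> f x) \<and> (AE y in \<nu>. 0 \<le> g y)}"

definition couplings :: "'a::topological_space measure \<Rightarrow> 'b::topological_space measure \<Rightarrow>
    ('a \<Rightarrow> real) \<Rightarrow> ('b \<Rightarrow> real) \<Rightarrow> ('a \<times> 'b) measure set" where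
  "couplings \<mu> \<nu> f g = {\<pi>. sets \<pi> = sets borel \<and>
      (\<forall>A \<in> sets borel. emeasure \<pi> (A \<times> UNIV) = (\<integral>\<^sup>+x\<in>A. ennreal (f x) \<partial>\<mu>)) \<and>
      (\<forall>B \<in> sets borel. emeasure \<pi> (UNIV \<times> B) = (\<integral>\<^sup>+y\<in>B. ennreal (g y) \<partial>\<nu>))}"

definition Phi :: "'a::topological_space measure \<Rightarrow> 'b::topological_space measure \<Rightarrow>
    ('a \<times> 'b \<Rightarrow> ennreal) \<Rightarrow> (('a \<Rightarrow> real) \<times> ('b \<Rightarrow> real)) \<Rightarrow> ennreal" where
  "Phi \<mu> \<nu> c v = (INF \<pi> \<in> couplings \<mu> \<nu> (fst v) (snd v). \<integral>\<^sup>+z. c z \<partial>\<pi>)"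

definition lsc_within :: "'v set \<Rightarrow> ('v \<Rightarrow> 'v \<Rightarrow> real) \<Rightarrow> ('v \<Rightarrow> ennreal) \<Rightarrow> 'v \<Rightarrow> bool" where
  "lsc_within S d F v \<longleftrightarrow>
     (\<forall>t < F v. \<exists>\<delta> > 0. \<forall>w \<in> S. d w v < \<delta> \<longrightarrow> t < F w)"

definition Phibar :: "'a::topological_space measure \<Rightarrow> 'b::topological_space measure \<Rightarrow>
    ('a \<times> 'b \<Rightarrow> ennreal) \<Rightarrow> (('a \<Rightarrow> real) \<times> ('b \<Rightarrow> real)) \<Rightarrow> ennreal" where
  "Phibar \<mu> \<nu> c v =
     (SUP F \<in> {F. (\<forall>u \<in> Vset \<mu> \<nu>. lsc_within (Vset \<mu> \<nu>) (L1dist \<mu> \<nu>) F u) \<and>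
                 (\<forall>w \<in> Vplus \<mu> \<nu>. F w \<le> Phi \<mu> \<nu> c w)}. F v)"

definition Pi_eps :: "'a::topological_space measure \<Rightarrow> 'b::topological_space measure \<Rightarrow>
    real \<Rightarrow> ('a \<times> 'b) measure set" where
  "Pi_eps \<mu> \<nu> \<epsilon> = {\<pi>. sets \<pi> = sets borel \<and>
      emeasure \<pi> UNIV \<ge> ennreal (1 - \<epsilon>) \<and>
      (\<forall>A \<in> sets borel. emeasure \<pi> (A \<times> UNIV) \<le> emeasure \<mu> A) \<and>
      (\<forall>B \<in> sets borel. emeasure \<pi> (UNIV \<times> B) \<le> emeasure \<nu> B)}"

definition P_eps :: "'a::topological_space measure \<Rightarrow> 'b::topological_space measure \<Rightarrow>
    ('a \<times> 'b \<Rightarrow> ennreal) \<Rightarrow> real \<Rightarrow> ennreal" where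
  "P_eps \<mu> \<nu> c \<epsilon> = (INF \<pi> \<in> Pi_eps \<mu> \<nu> \<epsilon>. \<integral>\<^sup>+z. c z \<partial>\<pi>)"

definition P_rel :: "'a::topological_space measure \<Rightarrow> 'b::topological_space measure \<Rightarrow>
    ('a \<times> 'b \<Rightarrow> ennreal) \<Rightarrow> ennreal" where
  "P_rel \<mu> \<nu> c = Lim (at_right 0) (P_eps \<mu> \<nu> c)"

end

theory Submission
  imports Defs
begin

text \<open>The lower semicontinuous envelope of \<Phi> at (1,1) is the lower limit of \<Phi> at (1,1)
  along V_+, and \<Phi> is lower semicontinuous there iff it attains this limit; so everything
  reduces to showing that the lower limit is P^rel. A measure in \<Pi>^\<epsilon> has marginals
  with densities f, g \<le> 1 (Radon-Nikodym), hence it couples a pair (f,g) \<in> V_+ at L^1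
  distance at most 2\<epsilon> from (1,1). Conversely, multiplying a coupling of a pair (f,g) close
  to (1,1) by min 1 (1/f(x)) * min 1 (1/g(y)) lowers its cost, pushes its marginals below \<mu>
  and \<nu>, and, since ab \<ge> a + b - 1 on [0,1], loses mass at most ||f - 1||_1 + ||g - 1||_1.\<close>

section \<open>Lower semicontinuous envelopes\<close>

text \<open>The lower limit of \<Phi> at v along S, where v itself is not excluded.\<close>
definition lsc_envelope :: "'v set \<Rightarrow> ('v \<Rightarrow> 'v \<Rightarrow> real) \<Rightarrow> ('v \<Rightarrow> ennreal) \<Rightarrow> 'v \<Rightarrow> ennreal" where
  "lsc_envelope S d \<Phi> v = (SUP \<delta>\<in>{0<..}. INF w\<in>{w\<in>S. d w v < \<delta>}. \<Phi> w)"

lemma lsc_envelope_le: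
  assumes "w \<in> S" and "d w w = 0"
  shows "lsc_envelope S d \<Phi> w \<le> \<Phi> w"
  unfolding lsc_envelope_def
  by (rule SUP_least, rule INF_lower2[of w]) (use assms in auto)

lemma le_lsc_envelope:
  assumes "\<delta> > 0" and "\<And>w. w \<in> S \<Longrightarrow> d w v < \<delta> \<Longrightarrow> t \<le> \<Phi> w"
  shows "t \<le> lsc_envelope S d \<Phi> v"
proof -
  have "t \<le> (INF w\<in>{w\<in>S. d w v < \<delta>}. \<Phi> w)"
    by (rule INF_greatest) (use assms in auto)
  also have "\<dots> \<le> lsc_envelope S d \<Phi> v"
    unfolding lsc_envelope_def by (rule SUP_upper) (use assms in auto)
  finally show ?thesis .
qed

lemma lsc_within_lsc_envelope:
  assumes "S \<subseteq> V" and "u \<in> V"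
    and triangle: "\<And>u v w. u \<in> V \<Longrightarrow> v \<in> V \<Longrightarrow> w \<in> V \<Longrightarrow> d u w \<le> d u v + d v w"
  shows "lsc_within V d (lsc_envelope S d \<Phi>) u"
  unfolding lsc_within_def
proof (intro allI impI)
  fix t assume "t < lsc_envelope S d \<Phi> u"
  then obtain \<delta> where "\<delta> > 0" and t: "t < (INF w\<in>{w\<in>S. d w u < \<delta>}. \<Phi> w)"
    unfolding lsc_envelope_def by (auto simp: less_SUP_iff)
  have "t < lsc_envelope S d \<Phi> v" if "v \<in> V" "d v u < \<delta>/2" for v
  proof -
    have "{w \<in> S. d w v < \<delta>/2} \<subseteq> {w \<in> S. d w u < \<delta>}"
      using triangle[of _ v u] that assms(1,2) by fastforce
    then have "(INF w\<in>{w\<in>S. d w u < \<delta>}. \<Phi> w) \<le> (INF w\<in>{w\<in>S. d w v < \<delta>/2}. \<Phi> w)"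
      by (rule INF_superset_mono) simp
    also have "\<dots> \<le> lsc_envelope S d \<Phi> v"
      unfolding lsc_envelope_def by (rule SUP_upper) (use \<open>\<delta> > 0\<close> in auto)
    finally show ?thesis using t by simp
  qed
  then show "\<exists>\<delta>>0. \<forall>v\<in>V. d v u < \<delta> \<longrightarrow> t < lsc_envelope S d \<Phi> v"
    using \<open>\<delta> > 0\<close> by (intro exI[of _ "\<delta>/2"]) auto
qed

lemma SUP_lsc_minorants_eq_lsc_envelope:
  assumes "S \<subseteq> V" and "p \<in> V"
    and triangle: "\<And>u v w. u \<in> V \<Longrightarrow> v \<in> V \<Longrightarrow> w \<in> V \<Longrightarrow> d u w \<le> d u v + d v w"
    and "\<And>w. w \<in> S \<Longrightarrow> d w w = 0"
  shows "(SUP F \<in> {F. (\<forall>u\<in>V. lsc_within V d F u) \<and> (\<forall>w\<in>S. F w \<le> \<Phi> w)}. F p)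
           = lsc_envelope S d \<Phi> p"
proof (rule antisym)
  show "(SUP F \<in> {F. (\<forall>u\<in>V. lsc_within V d F u) \<and> (\<forall>w\<in>S. F w \<le> \<Phi> w)}. F p)
          \<le> lsc_envelope S d \<Phi> p"
  proof (rule SUP_least)
    fix G assume G: "G \<in> {F. (\<forall>u\<in>V. lsc_within V d F u) \<and> (\<forall>w\<in>S. F w \<le> \<Phi> w)}"
    show "G p \<le> lsc_envelope S d \<Phi> p"
    proof (rule dense_le)
      fix t assume "t < G p"
      with G \<open>p \<in> V\<close> obtain \<delta> where "\<delta> > 0" "\<forall>w\<in>V. d w p < \<delta> \<longrightarrow> t < G w"
        unfolding lsc_within_def by blast
      then show "t \<le> lsc_envelope S d \<Phi> p"
      proof (intro le_lsc_envelope[of \<delta>])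
        fix w assume "w \<in> S" "d w p < \<delta>"
        then have "t < G w" using \<open>\<forall>w\<in>V. d w p < \<delta> \<longrightarrow> t < G w\<close> \<open>S \<subseteq> V\<close> by blast
        also have "G w \<le> \<Phi> w" using G \<open>w \<in> S\<close> by blast
        finally show "t \<le> \<Phi> w" by simp
      qed simp
    qed
  qed
  show "lsc_envelope S d \<Phi> p
          \<le> (SUP F \<in> {F. (\<forall>u\<in>V. lsc_within V d F u) \<and> (\<forall>w\<in>S. F w \<le> \<Phi> w)}. F p)"
  proof (rule SUP_upper, safe)
    show "lsc_within V d (lsc_envelope S d \<Phi>) u" if "u \<in> V" for u
      using assms(1) that triangle by (rule lsc_within_lsc_envelope)
    show "lsc_envelope S d \<Phi> w \<le> \<Phi> w" if "w \<in> S" for w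
      using that assms(4)[OF that] by (rule lsc_envelope_le)
  qed
qed

lemma lsc_within_iff_eq_lsc_envelope:
  assumes "p \<in> S" and "d p p = 0"
  shows "lsc_within S d \<Phi> p \<longleftrightarrow> \<Phi> p = lsc_envelope S d \<Phi> p"
proof
  assume lsc: "lsc_within S d \<Phi> p"
  have "\<Phi> p \<le> lsc_envelope S d \<Phi> p"
  proof (rule dense_le)
    fix t assume "t < \<Phi> p"
    with lsc obtain \<delta> where "\<delta> > 0" "\<forall>w\<in>S. d w p < \<delta> \<longrightarrow> t < \<Phi> w"
      unfolding lsc_within_def by blast
    then show "t \<le> lsc_envelope S d \<Phi> p" by (intro le_lsc_envelope[of \<delta>]) auto
  qed
  then show "\<Phi> p = lsc_envelope S d \<Phi> p"
    using lsc_envelope_le[of p S d \<Phi>, OF assms] by (rule antisym)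
next
  assume eq: "\<Phi> p = lsc_envelope S d \<Phi> p"
  show "lsc_within S d \<Phi> p"
    unfolding lsc_within_def eq unfolding lsc_envelope_def
    by (fastforce simp: less_SUP_iff less_INF_D)
qed

lemma integral_abs_diff_triangle:
  fixes f g h :: "'a \<Rightarrow> real"
  assumes "integrable M f" "integrable M g" "integrable M h"
  shows "(\<integral>x. \<bar>f x - h x\<bar> \<partial>M) \<le> (\<integral>x. \<bar>f x - g x\<bar> \<partial>M) + (\<integral>x. \<bar>g x - h x\<bar> \<partial>M)"
proof -
  have "(\<integral>x. \<bar>f x - h x\<bar> \<partial>M) \<le> (\<integral>x. \<bar>f x - g x\<bar> + \<bar>g x - h x\<bar> \<partial>M)"
    by (rule integral_mono) (use assms in auto)
  also have "\<dots> = (\<integral>x. \<bar>f x - g x\<bar> \<partial>M) + (\<integral>x. \<bar>g x - h x\<bar> \<partial>M)"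
    by (rule Bochner_Integration.integral_add) (use assms in auto)
  finally show ?thesis .
qed

lemma L1dist_triangle:
  assumes "u \<in> Vset \<mu> \<nu>" "v \<in> Vset \<mu> \<nu>" "w \<in> Vset \<mu> \<nu>"
  shows "L1dist \<mu> \<nu> u w \<le> L1dist \<mu> \<nu> u v + L1dist \<mu> \<nu> v w"
  using assms integral_abs_diff_triangle[of \<mu> "fst u" "fst v" "fst w"]
    integral_abs_diff_triangle[of \<nu> "snd u" "snd v" "snd w"]
  unfolding L1dist_def Vset_def by auto

lemma Lim_at_right_0_antimono:
  fixes F :: "real \<Rightarrow> 'a::{complete_linorder, linorder_topology}"
  assumes antimono: "\<And>x y. 0 < x \<Longrightarrow> x \<le> y \<Longrightarrow> F y \<le> F x"
  shows "Lim (at_right 0) F = (SUP \<epsilon>\<in>{0<..}. F \<epsilon>)"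
proof (rule tendsto_Lim)
  show "(F \<longlongrightarrow> (SUP \<epsilon>\<in>{0<..}. F \<epsilon>)) (at_right 0)"
  proof (rule order_tendstoI)
    fix a assume "a < (SUP \<epsilon>\<in>{0<..}. F \<epsilon>)"
    then obtain e where "e > 0" "a < F e" by (auto simp: less_SUP_iff)
    then show "\<forall>\<^sub>F x in at_right 0. a < F x"
      unfolding eventually_at_right[OF \<open>e > 0\<close>]
      by (intro exI[of _ e]) (metis antimono less_imp_le less_le_trans)
  next
    fix a assume "(SUP \<epsilon>\<in>{0<..}. F \<epsilon>) < a"
    have "F x < a" if "0 < x" for x
      using \<open>(SUP \<epsilon>\<in>{0<..}. F \<epsilon>) < a\<close> that by (auto intro: le_less_trans[OF SUP_upper])
    then show "\<forall>\<^sub>F x in at_right 0. F x < a"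
      using eventually_at_right_less[of "0::real"] by (auto elim: eventually_mono)
  qed
qed simp

lemma P_rel_eq_SUP: "P_rel \<mu> \<nu> c = (SUP \<epsilon>\<in>{0<..}. P_eps \<mu> \<nu> c \<epsilon>)"
proof -
  have "Pi_eps \<mu> \<nu> e1 \<subseteq> Pi_eps \<mu> \<nu> e2" if "e1 \<le> e2" for e1 e2
  proof -
    have "ennreal (1 - e2) \<le> ennreal (1 - e1)" using that by (intro ennreal_leI) simp
    then show ?thesis unfolding Pi_eps_def by (auto intro: order_trans)
  qed
  then show ?thesis
    unfolding P_rel_def P_eps_def by (intro Lim_at_right_0_antimono INF_superset_mono) auto
qed

section \<open>Marginals and densities\<close>

lemma borel_measurable_fst [measurable]:
  "fst \<in> borel_measurable (borel :: ('a::topological_space \<times> 'b::topological_space) measure)"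
  by (intro borel_measurable_continuous_onI continuous_intros)

lemma borel_measurable_snd [measurable]:
  "snd \<in> borel_measurable (borel :: ('a::topological_space \<times> 'b::topological_space) measure)"
  by (intro borel_measurable_continuous_onI continuous_intros)

lemma emeasure_distr_borel:
  assumes "sets \<pi> = sets borel" and "p \<in> borel_measurable borel" and "A \<in> sets borel"
  shows "emeasure (distr \<pi> borel p) A = emeasure \<pi> (p -` A)"
proof -
  have "p \<in> borel_measurable \<pi>" using assms(2) by (simp add: measurable_cong_sets[OF assms(1) refl])
  moreover have "p -` A \<inter> space \<pi> = p -` A" using sets_eq_imp_space_eq[OF assms(1)] by simp
  ultimately show ?thesis using assms(3) by (simp add: emeasure_distr)
qed

lemma distr_eq_density_of_marginal:
  assumes s\<pi>: "sets \<pi> = sets borel" and s\<mu>: "sets \<mu> = sets borel"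
    and p: "p \<in> borel_measurable borel" and f: "f \<in> borel_measurable borel"
    and marginal: "\<forall>A\<in>sets borel. emeasure \<pi> (p -` A) = (\<integral>\<^sup>+x\<in>A. f x \<partial>\<mu>)"
  shows "distr \<pi> borel p = density \<mu> f"
proof (rule measure_eqI)
  show "sets (distr \<pi> borel p) = sets (density \<mu> f)" using s\<mu> by simp
  fix A assume "A \<in> sets (distr \<pi> borel p)"
  then have A: "A \<in> sets borel" by simp
  have "f \<in> borel_measurable \<mu>" using f by (simp add: measurable_cong_sets[OF s\<mu> refl])
  then show "emeasure (distr \<pi> borel p) A = emeasure (density \<mu> f) A"
    using A marginal s\<mu> by (simp add: emeasure_distr_borel[OF s\<pi> p A] emeasure_density)
qed

lemma nn_integral_comp_marginal:
  assumes s\<pi>: "sets \<pi> = sets borel" and s\<mu>: "sets \<mu> = sets borel"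
    and p: "p \<in> borel_measurable borel" and f: "f \<in> borel_measurable borel"
    and marginal: "\<forall>A\<in>sets borel. emeasure \<pi> (p -` A) = (\<integral>\<^sup>+x\<in>A. f x \<partial>\<mu>)"
    and \<phi>: "\<phi> \<in> borel_measurable borel"
  shows "(\<integral>\<^sup>+z. \<phi> (p z) \<partial>\<pi>) = (\<integral>\<^sup>+x. f x * \<phi> x \<partial>\<mu>)"
proof -
  have "p \<in> \<pi> \<rightarrow>\<^sub>M borel" using p by (simp add: measurable_cong_sets[OF s\<pi> refl])
  then have "(\<integral>\<^sup>+z. \<phi> (p z) \<partial>\<pi>) = integral\<^sup>N (distr \<pi> borel p) \<phi>"
    using \<phi> by (simp add: nn_integral_distr)
  also have "\<dots> = integral\<^sup>N (density \<mu> f) \<phi>"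
    by (simp add: distr_eq_density_of_marginal[OF assms(1-5)])
  also have "\<dots> = (\<integral>\<^sup>+x. f x * \<phi> x \<partial>\<mu>)"
    using f \<phi> by (intro nn_integral_density) (simp_all add: measurable_cong_sets[OF s\<mu> refl])
  finally show ?thesis .
qed

lemma AE_density_le_one:
  assumes "finite_measure \<mu>" and f: "f \<in> borel_measurable \<mu>"
    and dominated: "\<And>A. A \<in> sets \<mu> \<Longrightarrow> emeasure (density \<mu> f) A \<le> emeasure \<mu> A"
  shows "AE x in \<mu>. f x \<le> 1"
proof (rule ccontr)
  define A where "A = {x\<in>space \<mu>. 1 < f x}"
  have A: "A \<in> sets \<mu>" unfolding A_def using f by measurable
  assume not_le_one: "\<not> (AE x in \<mu>. f x \<le> 1)"
  have "AE x in \<mu>. f x * indicator A x \<le> indicator A x \<longrightarrow> f x \<le> 1"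
    by (auto simp: A_def indicator_def not_less)
  then have not_AE: "\<not> (AE x in \<mu>. f x * indicator A x \<le> indicator A x)"
    using AE_mp not_le_one by metis
  have finite_A: "(\<integral>\<^sup>+x. indicator A x \<partial>\<mu>) \<noteq> \<infinity>"
    using A finite_measure.emeasure_finite[OF assms(1)] by simp
  have "emeasure \<mu> A = (\<integral>\<^sup>+x. indicator A x \<partial>\<mu>)" using A by simp
  also have "\<dots> < (\<integral>\<^sup>+x. f x * indicator A x \<partial>\<mu>)"
    using A f not_AE finite_A
    by (intro nn_integral_less) (auto simp: A_def indicator_def less_imp_le)
  also have "\<dots> = emeasure (density \<mu> f) A" using A f by (simp add: emeasure_density)
  also have "\<dots> \<le> emeasure \<mu> A" using dominated[OF A] .
  finally show False by simp
qed

lemma dominated_measure_has_unit_density: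
  assumes "finite_measure \<mu>" and sets_eq: "sets N = sets \<mu>"
    and dominated: "\<And>A. A \<in> sets \<mu> \<Longrightarrow> emeasure N A \<le> emeasure \<mu> A"
  obtains f where "f \<in> borel_measurable \<mu>" and "\<And>x. 0 \<le> f x \<and> f x \<le> 1"
    and "N = density \<mu> (\<lambda>x. ennreal (f x))"
proof -
  interpret finite_measure \<mu> by fact
  have "absolutely_continuous \<mu> N"
    using dominated sets_eq by (force simp: absolutely_continuous_def null_sets_def)
  then obtain f' where f': "f' \<in> borel_measurable \<mu>" and N: "density \<mu> f' = N"
    using Radon_Nikodym sets_eq by metis
  have le_one: "AE x in \<mu>. f' x \<le> 1"
    using assms(1) f' by (rule AE_density_le_one) (simp add: N dominated)
  define f where "f x = enn2real (min (f' x) 1)" for x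
  have "ennreal (f x) = min (f' x) 1" for x
    unfolding f_def by (intro ennreal_enn2real) (auto simp: min_def intro: le_less_trans[of _ 1])
  then have "density \<mu> f' = density \<mu> (\<lambda>x. ennreal (f x))"
    using f' le_one by (intro density_cong) (auto simp: f_def min_def elim!: eventually_mono)
  moreover have "0 \<le> f x \<and> f x \<le> 1" for x
    unfolding f_def using enn2real_mono[of "min (f' x) 1" 1] by simp
  moreover have "f \<in> borel_measurable \<mu>" unfolding f_def using f' by measurable
  ultimately show thesis using that N by metis
qed

lemma sub_marginal_has_unit_density:
  fixes \<pi> :: "'c::topological_space measure" and p :: "'c \<Rightarrow> 'a::topological_space"
  assumes "finite_measure \<mu>" and s\<mu>: "sets \<mu> = sets borel" and s\<pi>: "sets \<pi> = sets borel"
    and p: "p \<in> borel_measurable borel"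
    and dominated: "\<forall>A\<in>sets borel. emeasure \<pi> (p -` A) \<le> emeasure \<mu> A"
  obtains f where "f \<in> borel_measurable borel" and "\<And>x. 0 \<le> f x \<and> f x \<le> 1"
    and "\<forall>A\<in>sets borel. emeasure \<pi> (p -` A) = (\<integral>\<^sup>+x\<in>A. ennreal (f x) \<partial>\<mu>)"
proof -
  obtain f where f: "f \<in> borel_measurable \<mu>" "\<And>x. 0 \<le> f x \<and> f x \<le> 1"
    and density: "distr \<pi> borel p = density \<mu> (\<lambda>x. ennreal (f x))"
    using dominated_measure_has_unit_density[OF assms(1), of "distr \<pi> borel p"]
      s\<mu> dominated emeasure_distr_borel[OF s\<pi> p] by auto
  have "emeasure \<pi> (p -` A) = (\<integral>\<^sup>+x\<in>A. ennreal (f x) \<partial>\<mu>)" if "A \<in> sets borel" for A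
    using that f s\<mu> by (simp add: emeasure_distr_borel[OF s\<pi> p, symmetric] density emeasure_density)
  then show thesis
    using that f by (simp add: measurable_cong_sets[OF s\<mu> refl])
qed

lemma (in finite_measure) integrable_unit_bounded:
  fixes f :: "'a \<Rightarrow> real"
  assumes "f \<in> borel_measurable M" and "\<And>x. 0 \<le> f x \<and> f x \<le> 1"
  shows "integrable M f"
  by (rule integrable_const_bound[where B=1]) (use assms in auto)

lemma (in prob_space) integral_abs_diff_one:
  fixes f :: "'a \<Rightarrow> real"
  assumes "f \<in> borel_measurable M" and "\<And>x. 0 \<le> f x \<and> f x \<le> 1"
  shows "(\<integral>x. \<bar>f x - 1\<bar> \<partial>M) = 1 - (\<integral>x. f x \<partial>M)"
proof -
  have "integrable M f" by (rule integrable_unit_bounded) fact+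
  then have "(\<integral>x. 1 - f x \<partial>M) = 1 - (\<integral>x. f x \<partial>M)" by (simp add: prob_space)
  moreover have "(\<integral>x. \<bar>f x - 1\<bar> \<partial>M) = (\<integral>x. 1 - f x \<partial>M)"
    using assms(2) by (intro Bochner_Integration.integral_cong) auto
  ultimately show ?thesis by simp
qed

lemma (in finite_measure) nn_integral_eq_integral_unit_bounded:
  fixes f :: "'a \<Rightarrow> real"
  assumes "f \<in> borel_measurable M" and "\<And>x. 0 \<le> f x \<and> f x \<le> 1"
  shows "(\<integral>\<^sup>+x. ennreal (f x) \<partial>M) = ennreal (\<integral>x. f x \<partial>M)"
  by (rule nn_integral_eq_integral[OF integrable_unit_bounded[OF assms]]) (use assms(2) in auto)

lemma Pi_eps_coupling_near_one:
  fixes \<mu> :: "'a::topological_space measure" and \<nu> :: "'b::topological_space measure"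
  assumes "prob_space \<mu>" and s\<mu>: "sets \<mu> = sets borel"
    and "prob_space \<nu>" and s\<nu>: "sets \<nu> = sets borel"
    and "\<pi> \<in> Pi_eps \<mu> \<nu> \<epsilon>"
  obtains w where "w \<in> Vplus \<mu> \<nu>" and "L1dist \<mu> \<nu> w (\<lambda>_. 1, \<lambda>_. 1) \<le> 2 * \<epsilon>"
    and "\<pi> \<in> couplings \<mu> \<nu> (fst w) (snd w)"
proof -
  interpret M: prob_space \<mu> by fact
  interpret N: prob_space \<nu> by fact
  have s\<pi>: "sets \<pi> = sets borel" and mass: "ennreal (1 - \<epsilon>) \<le> emeasure \<pi> UNIV"
    and fst_dominated: "\<forall>A\<in>sets borel. emeasure \<pi> (fst -` A) \<le> emeasure \<mu> A"
    and snd_dominated: "\<forall>B\<in>sets borel. emeasure \<pi> (snd -` B) \<le> emeasure \<nu> B"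
    using \<open>\<pi> \<in> Pi_eps \<mu> \<nu> \<epsilon>\<close> unfolding Pi_eps_def by (auto simp: vimage_fst vimage_snd)
  obtain f where f: "f \<in> borel_measurable borel" "\<And>x. 0 \<le> f x \<and> f x \<le> 1"
    and f_marginal: "\<forall>A\<in>sets borel. emeasure \<pi> (fst -` A) = (\<integral>\<^sup>+x\<in>A. ennreal (f x) \<partial>\<mu>)"
    by (rule sub_marginal_has_unit_density[OF M.finite_measure_axioms s\<mu> s\<pi> borel_measurable_fst fst_dominated]) blast
  obtain g where g: "g \<in> borel_measurable borel" "\<And>y. 0 \<le> g y \<and> g y \<le> 1"
    and g_marginal: "\<forall>B\<in>sets borel. emeasure \<pi> (snd -` B) = (\<integral>\<^sup>+y\<in>B. ennreal (g y) \<partial>\<nu>)"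
    by (rule sub_marginal_has_unit_density[OF N.finite_measure_axioms s\<nu> s\<pi> borel_measurable_snd snd_dominated]) blast
  have fM: "f \<in> borel_measurable \<mu>" and gN: "g \<in> borel_measurable \<nu>"
    using f g by (simp_all add: measurable_cong_sets[OF s\<mu> refl] measurable_cong_sets[OF s\<nu> refl])
  have "emeasure \<pi> UNIV = ennreal (\<integral>x. f x \<partial>\<mu>)"
    using f_marginal[rule_format, of UNIV] M.nn_integral_eq_integral_unit_bounded[OF fM f(2)] by simp
  moreover have "emeasure \<pi> UNIV = ennreal (\<integral>y. g y \<partial>\<nu>)"
    using g_marginal[rule_format, of UNIV] N.nn_integral_eq_integral_unit_bounded[OF gN g(2)] by simp
  moreover have "0 \<le> (\<integral>x. f x \<partial>\<mu>)" "0 \<le> (\<integral>y. g y \<partial>\<nu>)"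
    using f(2) g(2) by (simp_all add: integral_nonneg)
  ultimately have same_mass: "(\<integral>x. f x \<partial>\<mu>) = (\<integral>y. g y \<partial>\<nu>)"
    and "1 - \<epsilon> \<le> (\<integral>x. f x \<partial>\<mu>)"
    using mass by (simp_all add: ennreal_le_iff)
  show thesis
  proof (rule that[of "(f, g)"])
    show "(f, g) \<in> Vplus \<mu> \<nu>"
      unfolding Vplus_def Vset_def
      using same_mass f(2) g(2) M.integrable_unit_bounded[OF fM f(2)] N.integrable_unit_bounded[OF gN g(2)]
      by auto
    show "L1dist \<mu> \<nu> (f, g) (\<lambda>_. 1, \<lambda>_. 1) \<le> 2 * \<epsilon>"
      unfolding L1dist_def using M.integral_abs_diff_one[OF fM f(2)] N.integral_abs_diff_one[OF gN g(2)]
        same_mass \<open>1 - \<epsilon> \<le> (\<integral>x. f x \<partial>\<mu>)\<close> by simp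
    show "\<pi> \<in> couplings \<mu> \<nu> (fst (f, g)) (snd (f, g))"
      using s\<pi> f_marginal g_marginal by (simp add: couplings_def vimage_fst vimage_snd)
  qed
qed

lemma couplingsD:
  assumes "\<pi> \<in> couplings \<mu> \<nu> f g"
  shows "sets \<pi> = sets borel"
    and "\<forall>A\<in>sets borel. emeasure \<pi> (fst -` A) = (\<integral>\<^sup>+x\<in>A. ennreal (f x) \<partial>\<mu>)"
    and "\<forall>B\<in>sets borel. emeasure \<pi> (snd -` B) = (\<integral>\<^sup>+y\<in>B. ennreal (g y) \<partial>\<nu>)"
  using assms unfolding couplings_def by (auto simp: vimage_fst vimage_snd)

lemma Vplus_borel_measurable:
  assumes "(f, g) \<in> Vplus \<mu> \<nu>" and "sets \<mu> = sets borel" and "sets \<nu> = sets borel"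
  shows "f \<in> borel_measurable borel" and "g \<in> borel_measurable borel"
  using assms(1) unfolding Vplus_def Vset_def
  by (auto dest!: borel_measurable_integrable
      simp: measurable_cong_sets[OF assms(2) refl] measurable_cong_sets[OF assms(3) refl])

lemma (in prob_space) integral_min_one_lower_bounds:
  fixes f :: "'a \<Rightarrow> real"
  assumes "integrable M f"
  shows "1 - (\<integral>x. \<bar>f x - 1\<bar> \<partial>M) \<le> (\<integral>x. min (f x) 1 \<partial>M)"
    and "(\<integral>x. f x \<partial>M) - (\<integral>x. \<bar>f x - 1\<bar> \<partial>M) \<le> (\<integral>x. min (f x) 1 \<partial>M)"
proof -
  have "1 - (\<integral>x. \<bar>f x - 1\<bar> \<partial>M) = (\<integral>x. 1 - \<bar>f x - 1\<bar> \<partial>M)"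
    using assms by (simp add: Bochner_Integration.integral_diff prob_space)
  also have "\<dots> \<le> (\<integral>x. min (f x) 1 \<partial>M)"
    using assms by (intro integral_mono Bochner_Integration.integrable_diff integrable_abs integrable_min) auto
  finally show "1 - (\<integral>x. \<bar>f x - 1\<bar> \<partial>M) \<le> (\<integral>x. min (f x) 1 \<partial>M)" .
  have "(\<integral>x. f x \<partial>M) - (\<integral>x. \<bar>f x - 1\<bar> \<partial>M) = (\<integral>x. f x - \<bar>f x - 1\<bar> \<partial>M)"
    using assms by (simp add: Bochner_Integration.integral_diff)
  also have "\<dots> \<le> (\<integral>x. min (f x) 1 \<partial>M)"
    using assms by (intro integral_mono Bochner_Integration.integrable_diff integrable_abs integrable_min) auto
  finally show "(\<integral>x. f x \<partial>M) - (\<integral>x. \<bar>f x - 1\<bar> \<partial>M) \<le> (\<integral>x. min (f x) 1 \<partial>M)" .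
qed

section \<open>Damped couplings\<close>

text \<open>The damping factor min 1 (1/f(x)) * min 1 (1/g(y)), written with inverse (max 1 _).\<close>
definition damped_coupling ::
    "('a \<Rightarrow> real) \<Rightarrow> ('b \<Rightarrow> real) \<Rightarrow> ('a \<times> 'b) measure \<Rightarrow> ('a \<times> 'b) measure" where
  "damped_coupling f g \<pi> =
     density \<pi> (\<lambda>z. ennreal (inverse (max 1 (f (fst z))) * inverse (max 1 (g (snd z)))))"

lemma ennreal_mult_inverse_max_one: "ennreal t * ennreal (inverse (max 1 t)) = ennreal (min t 1)"
proof (cases "1 < t")
  case True
  then have "ennreal t * ennreal (inverse (max 1 t)) = ennreal (t * inverse (max 1 t))"
    by (intro ennreal_mult[symmetric]) auto
  also have "t * inverse (max 1 t) = min t 1" using True by simp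
  finally show ?thesis .
qed (simp add: max_def min_def)

lemma ennreal_add_le_mult_add_one:
  fixes a b :: real
  assumes "0 \<le> a" "a \<le> 1" "0 \<le> b" "b \<le> 1"
  shows "ennreal a + ennreal b \<le> ennreal (a * b) + 1"
proof -
  have "a + b \<le> a * b + 1"
    using mult_nonneg_nonneg[of "1 - a" "1 - b"] assms by (simp add: algebra_simps)
  moreover have "ennreal a + ennreal b = ennreal (a + b)" using assms by (simp add: ennreal_plus)
  moreover have "ennreal (a * b) + 1 = ennreal (a * b + 1)" using assms by (simp add: ennreal_plus)
  ultimately show ?thesis by (simp add: ennreal_leI)
qed

lemma ennreal_le_of_add_bound:
  fixes a b m x :: real
  assumes "x + m \<le> a + b" and "ennreal a + ennreal b \<le> H + ennreal m"
    and "0 \<le> a" and "0 \<le> b" and "0 \<le> m"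
  shows "ennreal x \<le> H"
proof (cases "0 \<le> x")
  case True
  then have "ennreal m + ennreal x \<le> ennreal a + ennreal b"
    using assms(1,3-5) by (simp add: ennreal_plus[symmetric] ennreal_leI add.commute del: ennreal_plus)
  also have "\<dots> \<le> ennreal m + H" using assms(2) by (simp add: add.commute)
  finally show ?thesis by (simp add: ennreal_add_left_cancel_le)
qed (simp add: ennreal_neg)

lemma nn_integral_damping_marginal:
  assumes s\<pi>: "sets \<pi> = sets borel" and s\<mu>: "sets \<mu> = sets borel"
    and p: "p \<in> borel_measurable borel" and f: "f \<in> borel_measurable borel"
    and marginal: "\<forall>A\<in>sets borel. emeasure \<pi> (p -` A) = (\<integral>\<^sup>+x\<in>A. ennreal (f x) \<partial>\<mu>)"
  shows "(\<integral>\<^sup>+z. ennreal (inverse (max 1 (f (p z)))) \<partial>\<pi>) = (\<integral>\<^sup>+x. ennreal (min (f x) 1) \<partial>\<mu>)"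
proof -
  note [measurable] = f
  have "(\<integral>\<^sup>+z. ennreal (inverse (max 1 (f (p z)))) \<partial>\<pi>)
      = (\<integral>\<^sup>+x. ennreal (f x) * ennreal (inverse (max 1 (f x))) \<partial>\<mu>)"
    by (rule nn_integral_comp_marginal[OF s\<pi> s\<mu> p _ marginal]) measurable
  then show ?thesis by (simp add: ennreal_mult_inverse_max_one)
qed

lemma emeasure_density_vimage_le_damped:
  assumes s\<pi>: "sets \<pi> = sets borel" and s\<mu>: "sets \<mu> = sets borel"
    and p: "p \<in> borel_measurable borel" and f: "f \<in> borel_measurable borel"
    and marginal: "\<forall>A\<in>sets borel. emeasure \<pi> (p -` A) = (\<integral>\<^sup>+x\<in>A. ennreal (f x) \<partial>\<mu>)"
    and h: "h \<in> borel_measurable \<pi>" and h_le: "\<And>z. h z \<le> ennreal (inverse (max 1 (f (p z))))"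
    and A: "A \<in> sets borel"
  shows "emeasure (density \<pi> h) (p -` A) \<le> emeasure \<mu> A"
proof -
  note [measurable] = f A
  have "p -` A \<in> sets \<pi>"
    using measurable_sets[OF p A] s\<pi> sets_eq_imp_space_eq[OF s\<pi>] by simp
  then have "emeasure (density \<pi> h) (p -` A) = (\<integral>\<^sup>+z. h z * indicator A (p z) \<partial>\<pi>)"
    using h by (simp add: emeasure_density indicator_vimage)
  also have "\<dots> \<le> (\<integral>\<^sup>+z. ennreal (inverse (max 1 (f (p z)))) * indicator A (p z) \<partial>\<pi>)"
    using h_le by (intro nn_integral_mono mult_right_mono) auto
  also have "\<dots> = (\<integral>\<^sup>+x. ennreal (f x) * (ennreal (inverse (max 1 (f x))) * indicator A x) \<partial>\<mu>)"
    by (intro nn_integral_comp_marginal[OF s\<pi> s\<mu> p _ marginal]) measurable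
  also have "\<dots> \<le> (\<integral>\<^sup>+x. indicator A x \<partial>\<mu>)"
    by (intro nn_integral_mono)
      (simp add: ennreal_mult_inverse_max_one mult.assoc[symmetric] mult_left_le_one_le split: split_indicator)
  also have "\<dots> = emeasure \<mu> A" using A s\<mu> by simp
  finally show ?thesis .
qed

lemma damped_coupling_mass:
  fixes \<mu> :: "'a::topological_space measure" and \<nu> :: "'b::topological_space measure"
  assumes "prob_space \<mu>" and s\<mu>: "sets \<mu> = sets borel"
    and "prob_space \<nu>" and s\<nu>: "sets \<nu> = sets borel"
    and w: "(f, g) \<in> Vplus \<mu> \<nu>" and \<pi>: "\<pi> \<in> couplings \<mu> \<nu> f g"
  shows "ennreal (1 - L1dist \<mu> \<nu> (f, g) (\<lambda>_. 1, \<lambda>_. 1)) \<le> emeasure (damped_coupling f g \<pi>) UNIV"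
proof -
  interpret M: prob_space \<mu> by fact
  interpret N: prob_space \<nu> by fact
  have fi: "integrable \<mu> f" and gi: "integrable \<nu> g"
    and same_mass: "(\<integral>x. f x \<partial>\<mu>) = (\<integral>y. g y \<partial>\<nu>)"
    and f0: "AE x in \<mu>. 0 \<le> f x" and g0: "AE y in \<nu>. 0 \<le> g y"
    using w unfolding Vplus_def Vset_def by auto
  note s\<pi> = couplingsD(1)[OF \<pi>] and f_marginal = couplingsD(2)[OF \<pi>]
    and g_marginal = couplingsD(3)[OF \<pi>]
  note [measurable] = Vplus_borel_measurable[OF w s\<mu> s\<nu>]
  define a where "a x = inverse (max 1 (f x))" for x
  define b where "b y = inverse (max 1 (g y))" for y
  have a: "0 \<le> a x" "a x \<le> 1" and b: "0 \<le> b y" "b y \<le> 1" for x y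
    by (auto simp: a_def b_def max_def inverse_le_1_iff)
  define m where "m = (\<integral>x. f x \<partial>\<mu>)"
  define tf where "tf = (\<integral>x. min (f x) 1 \<partial>\<mu>)"
  define tg where "tg = (\<integral>y. min (g y) 1 \<partial>\<nu>)"
  define df where "df = (\<integral>x. \<bar>f x - 1\<bar> \<partial>\<mu>)"
  define dg where "dg = (\<integral>y. \<bar>g y - 1\<bar> \<partial>\<nu>)"
  have tf: "(\<integral>\<^sup>+z. ennreal (a (fst z)) \<partial>\<pi>) = ennreal tf"
    unfolding a_def tf_def using fi f0
    by (simp add: nn_integral_damping_marginal[OF s\<pi> s\<mu> borel_measurable_fst _ f_marginal]
        nn_integral_eq_integral)
  have tg: "(\<integral>\<^sup>+z. ennreal (b (snd z)) \<partial>\<pi>) = ennreal tg"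
    unfolding b_def tg_def using gi g0
    by (simp add: nn_integral_damping_marginal[OF s\<pi> s\<nu> borel_measurable_snd _ g_marginal]
        nn_integral_eq_integral)
  have m: "emeasure \<pi> UNIV = ennreal m"
    using f_marginal[rule_format, of UNIV] fi f0 by (simp add: m_def nn_integral_eq_integral)
  have "ennreal tf + ennreal tg = (\<integral>\<^sup>+z. ennreal (a (fst z)) + ennreal (b (snd z)) \<partial>\<pi>)"
    unfolding tf[symmetric] tg[symmetric] using s\<pi>
    by (intro nn_integral_add[symmetric]) (simp_all add: a_def b_def measurable_cong_sets[OF s\<pi> refl])
  also have "\<dots> \<le> (\<integral>\<^sup>+z. ennreal (a (fst z) * b (snd z)) + 1 \<partial>\<pi>)"
    using a b by (intro nn_integral_mono ennreal_add_le_mult_add_one)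
  also have "\<dots> = emeasure (damped_coupling f g \<pi>) UNIV + ennreal m"
    using s\<pi> sets_eq_imp_space_eq[OF s\<pi>] m
    by (simp add: damped_coupling_def a_def b_def emeasure_density nn_integral_add
        measurable_cong_sets[OF s\<pi> refl])
  finally have ennreal_bound: "ennreal tf + ennreal tg \<le> emeasure (damped_coupling f g \<pi>) UNIV + ennreal m" .
  have "1 - df \<le> tf" "m - dg \<le> tg"
    using M.integral_min_one_lower_bounds(1)[OF fi] N.integral_min_one_lower_bounds(2)[OF gi]
    by (simp_all add: tf_def tg_def df_def dg_def m_def same_mass)
  then show ?thesis
    using ennreal_bound by (intro ennreal_le_of_add_bound[where a=tf and b=tg and m=m])
      (auto simp: L1dist_def df_def dg_def tf_def tg_def m_def intro!: integral_nonneg_AE f0 g0)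
qed

lemma damped_coupling_in_Pi_eps:
  fixes \<mu> :: "'a::topological_space measure" and \<nu> :: "'b::topological_space measure"
  assumes "prob_space \<mu>" and s\<mu>: "sets \<mu> = sets borel"
    and "prob_space \<nu>" and s\<nu>: "sets \<nu> = sets borel"
    and w: "(f, g) \<in> Vplus \<mu> \<nu>" and \<pi>: "\<pi> \<in> couplings \<mu> \<nu> f g"
    and close: "L1dist \<mu> \<nu> (f, g) (\<lambda>_. 1, \<lambda>_. 1) < \<delta>"
  shows "damped_coupling f g \<pi> \<in> Pi_eps \<mu> \<nu> \<delta>"
proof -
  note s\<pi> = couplingsD(1)[OF \<pi>] and f_marginal = couplingsD(2)[OF \<pi>]
    and g_marginal = couplingsD(3)[OF \<pi>]
  note [measurable] = Vplus_borel_measurable[OF w s\<mu> s\<nu>]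
  let ?h = "\<lambda>z. ennreal (inverse (max 1 (f (fst z))) * inverse (max 1 (g (snd z))))"
  have h: "?h \<in> borel_measurable \<pi>" by (simp add: measurable_cong_sets[OF s\<pi> refl])
  have inv: "0 \<le> inverse (max 1 t)" "inverse (max 1 t) \<le> 1" for t :: real
    by (auto simp: max_def inverse_le_1_iff)
  have "emeasure (damped_coupling f g \<pi>) (A \<times> UNIV) \<le> emeasure \<mu> A" if "A \<in> sets borel" for A
    unfolding damped_coupling_def vimage_fst[symmetric]
    using inv that by (intro emeasure_density_vimage_le_damped[OF s\<pi> s\<mu> _ _ f_marginal h])
      (auto intro!: ennreal_leI mult_left_le)
  moreover have "emeasure (damped_coupling f g \<pi>) (UNIV \<times> B) \<le> emeasure \<nu> B" if "B \<in> sets borel" for B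
    unfolding damped_coupling_def vimage_snd[symmetric]
    using inv that by (intro emeasure_density_vimage_le_damped[OF s\<pi> s\<nu> _ _ g_marginal h])
      (auto intro!: ennreal_leI mult_left_le_one_le)
  moreover have "ennreal (1 - \<delta>) \<le> emeasure (damped_coupling f g \<pi>) UNIV"
    using close by (intro order_trans[OF ennreal_leI damped_coupling_mass[OF assms(1-6)]]) simp
  ultimately show ?thesis
    using s\<pi> by (simp add: Pi_eps_def damped_coupling_def)
qed

lemma nn_integral_damped_coupling_le:
  assumes s\<pi>: "sets \<pi> = sets borel"
    and [measurable]: "f \<in> borel_measurable borel" "g \<in> borel_measurable borel" "c \<in> borel_measurable borel"
  shows "(\<integral>\<^sup>+z. c z \<partial>damped_coupling f g \<pi>) \<le> (\<integral>\<^sup>+z. c z \<partial>\<pi>)"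
proof -
  have "(\<integral>\<^sup>+z. c z \<partial>damped_coupling f g \<pi>)
      = (\<integral>\<^sup>+z. ennreal (inverse (max 1 (f (fst z))) * inverse (max 1 (g (snd z)))) * c z \<partial>\<pi>)"
    unfolding damped_coupling_def
    by (rule nn_integral_density) (simp_all add: measurable_cong_sets[OF s\<pi> refl])
  also have "\<dots> \<le> (\<integral>\<^sup>+z. 1 * c z \<partial>\<pi>)"
    by (intro nn_integral_mono mult_right_mono)
      (auto simp: max_def inverse_le_1_iff intro!: mult_le_one)
  finally show ?thesis by simp
qed

lemma lsc_envelope_Phi_eq_P_rel:
  fixes \<mu> :: "'a::topological_space measure" and \<nu> :: "'b::topological_space measure"
    and c :: "'a \<times> 'b \<Rightarrow> ennreal"
  assumes "prob_space \<mu>" and s\<mu>: "sets \<mu> = sets borel"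
    and "prob_space \<nu>" and s\<nu>: "sets \<nu> = sets borel"
    and c: "c \<in> borel_measurable borel"
  shows "lsc_envelope (Vplus \<mu> \<nu>) (L1dist \<mu> \<nu>) (Phi \<mu> \<nu> c) (\<lambda>_. 1, \<lambda>_. 1) = P_rel \<mu> \<nu> c"
proof (rule antisym)
  let ?E = "\<lambda>\<delta>. INF w\<in>{w\<in>Vplus \<mu> \<nu>. L1dist \<mu> \<nu> w (\<lambda>_. 1, \<lambda>_. 1) < \<delta>}. Phi \<mu> \<nu> c w"
  have "?E \<delta> \<le> P_eps \<mu> \<nu> c (\<delta>/4)" if "\<delta> > 0" for \<delta>
    unfolding P_eps_def
  proof (rule INF_greatest)
    fix \<pi> assume "\<pi> \<in> Pi_eps \<mu> \<nu> (\<delta>/4)"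
    then obtain w where "w \<in> Vplus \<mu> \<nu>" "L1dist \<mu> \<nu> w (\<lambda>_. 1, \<lambda>_. 1) \<le> 2 * (\<delta>/4)"
      and "\<pi> \<in> couplings \<mu> \<nu> (fst w) (snd w)"
      by (rule Pi_eps_coupling_near_one[OF assms(1-4)])
    then have "?E \<delta> \<le> Phi \<mu> \<nu> c w" and "Phi \<mu> \<nu> c w \<le> (\<integral>\<^sup>+z. c z \<partial>\<pi>)"
      using \<open>\<delta> > 0\<close> unfolding Phi_def by (auto intro!: INF_lower)
    then show "?E \<delta> \<le> (\<integral>\<^sup>+z. c z \<partial>\<pi>)" by (rule order_trans)
  qed
  then show "lsc_envelope (Vplus \<mu> \<nu>) (L1dist \<mu> \<nu>) (Phi \<mu> \<nu> c) (\<lambda>_. 1, \<lambda>_. 1) \<le> P_rel \<mu> \<nu> c"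
    unfolding lsc_envelope_def P_rel_eq_SUP
    by (intro SUP_mono) (auto intro!: bexI[of _ "_/4"])
next
  have "P_eps \<mu> \<nu> c \<epsilon> \<le> Phi \<mu> \<nu> c (f, g)"
    if "(f, g) \<in> Vplus \<mu> \<nu>" and "L1dist \<mu> \<nu> (f, g) (\<lambda>_. 1, \<lambda>_. 1) < \<epsilon>" for f g \<epsilon>
    unfolding Phi_def
  proof (rule INF_greatest)
    fix \<pi> assume \<pi>: "\<pi> \<in> couplings \<mu> \<nu> (fst (f, g)) (snd (f, g))"
    note Vplus_borel_measurable[OF that(1) s\<mu> s\<nu>] couplingsD(1)[OF \<pi>[simplified]]
    moreover have "damped_coupling f g \<pi> \<in> Pi_eps \<mu> \<nu> \<epsilon>"
      using \<pi> that by (intro damped_coupling_in_Pi_eps[OF assms(1-4)]) auto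
    ultimately show "P_eps \<mu> \<nu> c \<epsilon> \<le> (\<integral>\<^sup>+z. c z \<partial>\<pi>)"
      unfolding P_eps_def using c by (metis INF_lower2 nn_integral_damped_coupling_le)
  qed
  then show "P_rel \<mu> \<nu> c \<le> lsc_envelope (Vplus \<mu> \<nu>) (L1dist \<mu> \<nu>) (Phi \<mu> \<nu> c) (\<lambda>_. 1, \<lambda>_. 1)"
    unfolding P_rel_eq_SUP by (intro SUP_least le_lsc_envelope) auto
qed

theorem proposition2p3:
  fixes \<mu> :: "'a::polish_space measure" and \<nu> :: "'b::polish_space measure"
    and c :: "'a \<times> 'b \<Rightarrow> ennreal"
  assumes "prob_space \<mu>" and "sets \<mu> = sets borel"
    and "prob_space \<nu>" and "sets \<nu> = sets borel"
    and "c \<in> borel_measurable borel"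
  shows "Phibar \<mu> \<nu> c (\<lambda>_. 1, \<lambda>_. 1) = P_rel \<mu> \<nu> c \<and>
         (lsc_within (Vplus \<mu> \<nu>) (L1dist \<mu> \<nu>) (Phi \<mu> \<nu> c) (\<lambda>_. 1, \<lambda>_. 1)
            \<longleftrightarrow> Phi \<mu> \<nu> c (\<lambda>_. 1, \<lambda>_. 1) = P_rel \<mu> \<nu> c)"
proof -
  interpret M: prob_space \<mu> by fact
  interpret N: prob_space \<nu> by fact
  have V: "Vplus \<mu> \<nu> \<subseteq> Vset \<mu> \<nu>" by (auto simp: Vplus_def)
  have one: "(\<lambda>_. 1, \<lambda>_. 1) \<in> Vplus \<mu> \<nu>"
    by (simp add: Vplus_def Vset_def M.prob_space N.prob_space)
  have refl: "L1dist \<mu> \<nu> w w = 0" for w by (simp add: L1dist_def)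
  have "Phibar \<mu> \<nu> c (\<lambda>_. 1, \<lambda>_. 1) = lsc_envelope (Vplus \<mu> \<nu>) (L1dist \<mu> \<nu>) (Phi \<mu> \<nu> c) (\<lambda>_. 1, \<lambda>_. 1)"
    unfolding Phibar_def using V one refl
    by (intro SUP_lsc_minorants_eq_lsc_envelope L1dist_triangle) auto
  moreover have "lsc_within (Vplus \<mu> \<nu>) (L1dist \<mu> \<nu>) (Phi \<mu> \<nu> c) (\<lambda>_. 1, \<lambda>_. 1)
      \<longleftrightarrow> Phi \<mu> \<nu> c (\<lambda>_. 1, \<lambda>_. 1) = lsc_envelope (Vplus \<mu> \<nu>) (L1dist \<mu> \<nu>) (Phi \<mu> \<nu> c) (\<lambda>_. 1, \<lambda>_. 1)"
    using one refl by (rule lsc_within_iff_eq_lsc_envelope)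
  ultimately show ?thesis by (simp add: lsc_envelope_Phi_eq_P_rel[OF assms])
qed

end
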